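(* Let $N\ge3$, let $v_1,\dots,v_N$ and $\beta_1,\dots,\beta_{N-1}$ be variables/constants, $f_n=v_n+v_{n+1}$ (indices mod $N$), and let $T(\lambda)=V_N(\lambda+\beta_{N-1})\cdots V_2(\lambda+\beta_1)V_1(\lambda)=\begin{pmatrix}A(\lambda)&B(\lambda)\\C(\lambda)&D(\lambda)\end{pmatrix}$ with $V_n(\lambda)=\begin{pmatrix}v_n&1\\ \lambda+v_n^2&v_n\end{pmatrix}$. Then there is a polynomial $\tilde A(\lambda)$ such that $A(\lambda)=B(\lambda)v_1+\tilde A(\lambda)\lambda$. Moreover $\tilde A(\lambda)=f_2$ for $N=3$, and for $N\ge4$ $$\tilde A(\lambda)=\prod_{n=2}^{N-2}\Bigl(1+(\lambda+\beta_n)\frac{\partial^2}{\partial f_n\partial f_{n+1}}\Bigr)(f_2\cdots f_{N-1}),$$ while for all $N\ge3$ $$B(\lambda)=\prod_{n=1}^{N-2}\Bigl(1+(\lambda+\beta_n)\frac{\partial^2}{\partial f_n\partial f_{n+1}}\Bigr)(f_1\cdots f_{N-1}).$$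
   Context: In the product formulas the monomial $f_m\cdots f_{N-1}$ is treated as a polynomial in independent variables $f_m,\dots,f_{N-1}$; the commuting differential operators are applied and then $f_n=v_n+v_{n+1}$ is substituted. *)

theory Defs
  imports "HOL-Computational_Algebra.Polynomial" "HOL-Library.Poly_Mapping"
begin

type_synonym 'a mat2 = "'a \<times> 'a \<times> 'a \<times> 'a"

definition mat2_mult :: "'a::comm_ring_1 mat2 \<Rightarrow> 'a mat2 \<Rightarrow> 'a mat2" where
  "mat2_mult X Y = (case X of (a, b, c, d) \<Rightarrow> case Y of (e, f, g, h) \<Rightarrow>
      (a * e + b * g, a * f + b * h, c * e + d * g, c * f + d * h))"

definition mA :: "'a mat2 \<Rightarrow> 'a" where "mA X = fst X"
definition mB :: "'a mat2 \<Rightarrow> 'a" where "mB X = fst (snd X)"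

definition Vmat :: "'a::comm_ring_1 \<Rightarrow> 'a poly \<Rightarrow> 'a poly mat2" where
  "Vmat vn x = ([:vn:], 1, x + [:vn ^ 2:], [:vn:])"

definition argpoly :: "(nat \<Rightarrow> 'a::comm_ring_1) \<Rightarrow> nat \<Rightarrow> 'a poly" where
  "argpoly \<beta> n = (if n \<le> 1 then [:0, 1:] else [:\<beta> (n - 1), 1:])"

fun Tprod :: "(nat \<Rightarrow> 'a::comm_ring_1) \<Rightarrow> (nat \<Rightarrow> 'a) \<Rightarrow> nat \<Rightarrow> 'a poly mat2" where
  "Tprod v \<beta> 0 = (1, 0, 0, 1)"
| "Tprod v \<beta> (Suc k) = mat2_mult (Vmat (v (Suc k)) (argpoly \<beta> (Suc k))) (Tprod v \<beta> k)"

type_synonym 'a mpoly = "(nat \<Rightarrow>\<^sub>0 nat) \<Rightarrow>\<^sub>0 'a"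

definition fmono :: "nat \<Rightarrow> nat \<Rightarrow> 'a::comm_ring_1 mpoly" where
  "fmono m k = Poly_Mapping.single (\<Sum>i\<in>{m..k}. Poly_Mapping.single i 1) 1"

definition pdiff :: "nat \<Rightarrow> 'a::comm_ring_1 mpoly \<Rightarrow> 'a mpoly" where
  "pdiff i p = (\<Sum>m\<in>Poly_Mapping.keys p.
      Poly_Mapping.single (m - Poly_Mapping.single i 1)
        (of_nat (Poly_Mapping.lookup m i) * Poly_Mapping.lookup p m))"

definition dop :: "nat \<Rightarrow> 'a::comm_ring_1 \<Rightarrow> 'a mpoly \<Rightarrow> 'a mpoly" where
  "dop n c p = p + Poly_Mapping.map (\<lambda>a. c * a) (pdiff n (pdiff (Suc n) p))"

text \<open>Product over n = m..k of the operators 1 + c_n d^2/(df_n df_(n+1)) (they commute).\<close>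
definition dops :: "(nat \<Rightarrow> 'a::comm_ring_1) \<Rightarrow> nat \<Rightarrow> nat \<Rightarrow> 'a mpoly \<Rightarrow> 'a mpoly" where
  "dops c m k p = foldr (\<lambda>n q. dop n (c n) q) [m..<Suc k] p"

definition meval :: "(nat \<Rightarrow> 'a::comm_ring_1) \<Rightarrow> 'a mpoly \<Rightarrow> 'a" where
  "meval g p = (\<Sum>m\<in>Poly_Mapping.keys p.
      Poly_Mapping.lookup p m * (\<Prod>i\<in>Poly_Mapping.keys m. g i ^ Poly_Mapping.lookup m i))"

end

theory Submission
  imports Defs
begin

(* Both B(lambda) and (A(lambda) - B(lambda) v_1)/lambda obey the continuant recurrence
   X_(k+2) = f_(k+1) X_(k+1) + (lambda + beta_k) X_k, read off from the first row of
   V_(k+2) V_(k+1). On the other side, peeling the last operator 1 + c_k d^2/(df_k df_(k+1))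
   off the product applied to the square-free monomial f_m ... f_(k+1) gives the same
   recurrence: the operator either keeps the monomial or deletes the pair f_k f_(k+1).
   Comparing initial values identifies both sides with the same continuant. *)

fun continuant :: "(nat \<Rightarrow> 'a::comm_semiring_1) \<Rightarrow> (nat \<Rightarrow> 'a) \<Rightarrow> nat \<Rightarrow> nat \<Rightarrow> 'a" where
  "continuant g c m 0 = 1"
| "continuant g c m (Suc 0) = g m"
| "continuant g c m (Suc (Suc n)) =
    g (m + n + 1) * continuant g c m (Suc n) + c (m + n) * continuant g c m n"

lemma continuant_unique:
  fixes X :: "nat \<Rightarrow> 'a::comm_semiring_1"
  assumes "X 0 = a" "X (Suc 0) = a * g m"
    and "\<And>n. X (Suc (Suc n)) = g (m + n + 1) * X (Suc n) + c (m + n) * X n"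
  shows "X n = a * continuant g c m n"
  by (induction n rule: induct_nat_012) (simp_all add: assms algebra_simps)

lemma lookup_map_mult:
  "Poly_Mapping.lookup (Poly_Mapping.map (\<lambda>a. c * a) p) M = (c::'a::comm_ring_1) * Poly_Mapping.lookup p M"
  by (simp add: map.rep_eq when_def)

lemma lookup_pdiff:
  "Poly_Mapping.lookup (pdiff i p) N =
     of_nat (Poly_Mapping.lookup N i + 1) * Poly_Mapping.lookup p (N + Poly_Mapping.single i 1)"
proof -
  let ?e = "Poly_Mapping.single i (1::nat)"
  have term_eq: "Poly_Mapping.lookup
      (Poly_Mapping.single (M - ?e) (of_nat (Poly_Mapping.lookup M i) * Poly_Mapping.lookup p M)) N =
    (if M = N + ?e then of_nat (Poly_Mapping.lookup N i + 1) * Poly_Mapping.lookup p M else 0)" for M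
  proof (cases "Poly_Mapping.lookup M i = 0")
    case True
    then have "M \<noteq> N + ?e" by (auto simp: lookup_add)
    with True show ?thesis by (simp add: lookup_single)
  next
    case False
    then have "M = (M - ?e) + ?e"
      by (intro poly_mapping_eqI) (auto simp: lookup_add lookup_minus lookup_single when_def)
    then have "(M - ?e = N) \<longleftrightarrow> (M = N + ?e)" by auto
    then show ?thesis by (auto simp: lookup_single lookup_add when_def)
  qed
  show ?thesis
    unfolding pdiff_def lookup_sum term_eq by (simp add: sum.delta in_keys_iff)
qed

lemma lookup_dop:
  "Poly_Mapping.lookup (dop n c p) N = Poly_Mapping.lookup p N +
     c * of_nat (Poly_Mapping.lookup N n + 1) * of_nat (Poly_Mapping.lookup N (Suc n) + 1) *
       Poly_Mapping.lookup p (N + Poly_Mapping.single n 1 + Poly_Mapping.single (Suc n) 1)"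
  by (simp add: dop_def lookup_add lookup_map_mult lookup_pdiff lookup_single mult.assoc)

lemma dop_add: "dop n c (p + q) = dop n c p + dop n c q"
  by (rule poly_mapping_eqI) (simp add: lookup_dop lookup_add algebra_simps)

definition set_monomial :: "nat set \<Rightarrow> (nat \<Rightarrow>\<^sub>0 nat)" where
  "set_monomial S = (\<Sum>i\<in>S. Poly_Mapping.single i 1)"

lemma lookup_set_monomial:
  "finite S \<Longrightarrow> Poly_Mapping.lookup (set_monomial S) i = (if i \<in> S then 1 else 0)"
  by (simp add: set_monomial_def lookup_sum lookup_single when_def)

lemma keys_set_monomial: "finite S \<Longrightarrow> Poly_Mapping.keys (set_monomial S) = S"
  by (auto simp: in_keys_iff lookup_set_monomial split: if_splits)

lemma set_monomial_remove:
  "finite S \<Longrightarrow> i \<in> S \<Longrightarrow> set_monomial S = set_monomial (S - {i}) + Poly_Mapping.single i 1"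
  by (simp add: set_monomial_def sum.remove add.commute)

lemma set_monomial_eq_add_single_iff:
  assumes "finite S"
  shows "set_monomial S = M + Poly_Mapping.single i 1 \<longleftrightarrow> i \<in> S \<and> M = set_monomial (S - {i})"
proof
  assume eq: "set_monomial S = M + Poly_Mapping.single i 1"
  then have "Poly_Mapping.lookup (set_monomial S) i \<noteq> 0"
    by (simp add: lookup_add)
  then have "i \<in> S"
    using assms by (simp add: lookup_set_monomial split: if_splits)
  then show "i \<in> S \<and> M = set_monomial (S - {i})"
    using eq set_monomial_remove[OF assms] by simp
next
  assume "i \<in> S \<and> M = set_monomial (S - {i})"
  then show "set_monomial S = M + Poly_Mapping.single i 1"
    using set_monomial_remove[OF assms] by blast
qed

lemma dop_single_set_monomial:
  assumes "finite S"
  shows "dop n c (Poly_Mapping.single (set_monomial S) a) =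
    Poly_Mapping.single (set_monomial S) a +
    (if n \<in> S \<and> Suc n \<in> S then Poly_Mapping.single (set_monomial (S - {n, Suc n})) (c * a) else 0)"
proof (rule poly_mapping_eqI)
  fix N
  have "set_monomial S = N + Poly_Mapping.single n 1 + Poly_Mapping.single (Suc n) 1 \<longleftrightarrow>
      n \<in> S \<and> Suc n \<in> S \<and> N = set_monomial (S - {n, Suc n})"
  proof -
    have "set_monomial S = (N + Poly_Mapping.single n 1) + Poly_Mapping.single (Suc n) 1 \<longleftrightarrow>
        Suc n \<in> S \<and> N + Poly_Mapping.single n 1 = set_monomial (S - {Suc n})"
      by (rule set_monomial_eq_add_single_iff[OF assms])
    also have "\<dots> \<longleftrightarrow> Suc n \<in> S \<and> n \<in> S \<and> N = set_monomial (S - {Suc n} - {n})"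
      using set_monomial_eq_add_single_iff[of "S - {Suc n}" N n] assms by auto
    finally show ?thesis
      by (auto simp: insert_commute Diff_insert2[symmetric])
  qed
  moreover have "Poly_Mapping.lookup (set_monomial (S - {n, Suc n})) n = 0"
    "Poly_Mapping.lookup (set_monomial (S - {n, Suc n})) (Suc n) = 0"
    using assms by (simp_all add: lookup_set_monomial)
  ultimately show "Poly_Mapping.lookup (dop n c (Poly_Mapping.single (set_monomial S) a)) N =
    Poly_Mapping.lookup (Poly_Mapping.single (set_monomial S) a +
      (if n \<in> S \<and> Suc n \<in> S then Poly_Mapping.single (set_monomial (S - {n, Suc n})) (c * a) else 0)) N"
    by (auto simp: lookup_dop lookup_add lookup_single when_def mult.commute)
qed

definition dop_prod :: "(nat \<Rightarrow> 'a::comm_ring_1) \<Rightarrow> nat \<Rightarrow> nat \<Rightarrow> 'a mpoly \<Rightarrow> 'a mpoly" where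
  "dop_prod c m k = foldr (\<lambda>n. dop n (c n)) [m..<k]"

lemma dops_eq_dop_prod: "dops c m k = dop_prod c m (Suc k)"
  by (simp add: dops_def dop_prod_def fun_eq_iff del: upt_Suc)

lemma dop_prod_empty: "k \<le> m \<Longrightarrow> dop_prod c m k p = p"
  by (simp add: dop_prod_def)

lemma dop_prod_Suc: "m \<le> k \<Longrightarrow> dop_prod c m (Suc k) p = dop_prod c m k (dop k (c k) p)"
  by (simp add: dop_prod_def)

lemma dop_prod_add: "dop_prod c m k (p + q) = dop_prod c m k p + dop_prod c m k q"
proof -
  have "foldr (\<lambda>n. dop n (c n)) ns (p + q) =
      foldr (\<lambda>n. dop n (c n)) ns p + foldr (\<lambda>n. dop n (c n)) ns q" for ns
    by (induction ns) (simp_all add: dop_add)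
  then show ?thesis by (simp add: dop_prod_def)
qed

lemma dop_prod_zero [simp]: "dop_prod c m k 0 = 0"
  using dop_prod_add[of c m k 0 0] by simp

lemma dop_prod_drop_top:
  assumes "finite S" "k \<notin> S"
  shows "dop_prod c m k (Poly_Mapping.single (set_monomial S) a) =
    dop_prod c m (k - 1) (Poly_Mapping.single (set_monomial S) a)"
proof (cases "m < k")
  case True
  then obtain j where "k = Suc j" "m \<le> j" by (cases k) auto
  with assms show ?thesis by (simp add: dop_prod_Suc dop_single_set_monomial)
qed (simp add: dop_prod_empty)

lemma meval_eq_sum:
  "finite K \<Longrightarrow> Poly_Mapping.keys p \<subseteq> K \<Longrightarrow>
    meval g p = (\<Sum>M\<in>K. Poly_Mapping.lookup p M *
      (\<Prod>i\<in>Poly_Mapping.keys M. g i ^ Poly_Mapping.lookup M i))"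
  unfolding meval_def by (rule sum.mono_neutral_left) (auto simp: in_keys_iff)

lemma meval_zero [simp]: "meval g 0 = 0"
  by (simp add: meval_def)

lemma meval_add: "meval g (p + q) = meval g p + meval g q"
proof -
  let ?K = "Poly_Mapping.keys p \<union> Poly_Mapping.keys q"
  have "Poly_Mapping.keys (p + q) \<subseteq> ?K"
    by (rule keys_add)
  then show ?thesis
    by (simp add: meval_eq_sum[of ?K] lookup_add distrib_right sum.distrib)
qed

lemma meval_single_set_monomial:
  "finite S \<Longrightarrow> meval g (Poly_Mapping.single (set_monomial S) a) = a * (\<Prod>i\<in>S. g i)"
  by (simp add: meval_eq_sum[of "{set_monomial S}"] keys_set_monomial lookup_set_monomial)

lemma meval_dop_prod_insert:
  assumes "finite S" "j \<notin> S" "k < j"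
  shows "meval g (dop_prod c m k (Poly_Mapping.single (set_monomial (insert j S)) a)) =
    g j * meval g (dop_prod c m k (Poly_Mapping.single (set_monomial S) a))"
  using assms
proof (induction k arbitrary: S a)
  case 0
  then show ?case
    by (simp add: dop_prod_empty meval_single_set_monomial)
next
  case (Suc k)
  show ?case
  proof (cases "m \<le> k")
    case True
    have "k \<in> insert j S \<longleftrightarrow> k \<in> S" "Suc k \<in> insert j S \<longleftrightarrow> Suc k \<in> S"
      and "insert j S - {k, Suc k} = insert j (S - {k, Suc k})"
      using Suc.prems by auto
    with True Suc show ?thesis
      by (simp add: dop_prod_Suc dop_single_set_monomial dop_prod_add meval_add distrib_left)
  qed (simp add: dop_prod_empty meval_single_set_monomial Suc.prems)
qed

lemma meval_dop_prod_interval: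
  "meval g (dop_prod c m (m + n - 1) (Poly_Mapping.single (set_monomial {m..<m + n}) a)) =
    a * continuant g c m n"
proof (induction n arbitrary: a rule: induct_nat_012)
  case 0
  then show ?case by (simp add: dop_prod_empty meval_single_set_monomial)
next
  case 1
  then show ?case by (simp add: dop_prod_empty meval_single_set_monomial)
next
  case (ge2 n)
  let ?mon = "\<lambda>S b. Poly_Mapping.single (set_monomial S) b"
  have "dop (m + n) (c (m + n)) (?mon {m..<m + Suc (Suc n)} a) =
      ?mon (insert (m + n + 1) {m..<m + Suc n}) a + ?mon {m..<m + n} (c (m + n) * a)"
  proof -
    have "{m..<m + Suc (Suc n)} - {m + n, Suc (m + n)} = {m..<m + n}"
      and "{m..<m + Suc (Suc n)} = insert (m + n + 1) {m..<m + Suc n}"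
      by auto
    then show ?thesis by (simp add: dop_single_set_monomial)
  qed
  moreover have "meval g (dop_prod c m (m + n) (?mon (insert (m + n + 1) {m..<m + Suc n}) a)) =
      g (m + n + 1) * (a * continuant g c m (Suc n))"
    using ge2.IH(2) by (simp add: meval_dop_prod_insert)
  moreover have "meval g (dop_prod c m (m + n) (?mon {m..<m + n} b)) = b * continuant g c m n" for b
    using ge2.IH(1) by (simp add: dop_prod_drop_top)
  ultimately show ?case
    by (simp add: dop_prod_Suc dop_prod_add meval_add algebra_simps)
qed

lemma meval_dops_fmono:
  fixes g c :: "nat \<Rightarrow> 'a::comm_ring_1"
  shows "meval g (dops c m (m + n) (fmono m (Suc (m + n)))) = continuant g c m (n + 2)"
proof -
  have "(fmono m (Suc (m + n)) :: 'a mpoly) = Poly_Mapping.single (set_monomial {m..<m + (n + 2)}) 1"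
    by (simp add: fmono_def set_monomial_def atLeastLessThanSuc_atLeastAtMost)
  moreover have "m + (n + 2) - 1 = Suc (m + n)"
    by simp
  ultimately show ?thesis
    using meval_dop_prod_interval[of g c m "n + 2" 1] by (simp only: dops_eq_dop_prod mult_1)
qed

(* (a, 1) V_b(y) = (b + a) (b, 1) + (y, 0), and (b, 1) is the first row of V_b(y). *)
lemma Vmat_first_row_rec:
  fixes X :: "'a::comm_ring_1 poly mat2"
  shows "mA (mat2_mult (Vmat a x) (mat2_mult (Vmat b y) X)) =
      [:b + a:] * mA (mat2_mult (Vmat b y) X) + y * mA X"
    and "mB (mat2_mult (Vmat a x) (mat2_mult (Vmat b y) X)) =
      [:b + a:] * mB (mat2_mult (Vmat b y) X) + y * mB X"
  by (cases X; simp add: mat2_mult_def Vmat_def mA_def mB_def power2_eq_square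
        smult_add_left smult_add_right algebra_simps)+

lemma Tprod_first_row_rec:
  "mA (Tprod v \<beta> (Suc (Suc j))) =
    [:v (Suc j) + v (Suc (Suc j)):] * mA (Tprod v \<beta> (Suc j)) + argpoly \<beta> (Suc j) * mA (Tprod v \<beta> j)"
  "mB (Tprod v \<beta> (Suc (Suc j))) =
    [:v (Suc j) + v (Suc (Suc j)):] * mB (Tprod v \<beta> (Suc j)) + argpoly \<beta> (Suc j) * mB (Tprod v \<beta> j)"
  by (simp_all only: Tprod.simps Vmat_first_row_rec)

lemma Tprod_0_1:
  "mA (Tprod v \<beta> 0) = 1" "mB (Tprod v \<beta> 0) = 0"
  "mA (Tprod v \<beta> (Suc 0)) = [:v 1:]" "mB (Tprod v \<beta> (Suc 0)) = 1"
  by (simp_all add: mat2_mult_def Vmat_def mA_def mB_def)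

lemma mB_Tprod_continuant:
  "mB (Tprod v \<beta> (Suc n)) = continuant (\<lambda>i. [:v i + v (Suc i):]) (\<lambda>i. [:\<beta> i, 1:]) 1 n"
proof -
  have "mB (Tprod v \<beta> (Suc n)) = 1 * continuant (\<lambda>i. [:v i + v (Suc i):]) (\<lambda>i. [:\<beta> i, 1:]) 1 n"
  proof (rule continuant_unique)
    show "mB (Tprod v \<beta> (Suc 0)) = 1"
      by (fact Tprod_0_1)
    show "mB (Tprod v \<beta> (Suc (Suc 0))) = 1 * [:v 1 + v (Suc 1):]"
      using Tprod_first_row_rec(2)[of v \<beta> 0] by (simp add: Tprod_0_1 argpoly_def del: Tprod.simps)
  next
    fix k
    show "mB (Tprod v \<beta> (Suc (Suc (Suc k)))) = [:v (1 + k + 1) + v (Suc (1 + k + 1)):] *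
        mB (Tprod v \<beta> (Suc (Suc k))) + [:\<beta> (1 + k), 1:] * mB (Tprod v \<beta> (Suc k))"
      using Tprod_first_row_rec(2)[of v \<beta> "Suc k"] by (simp add: argpoly_def del: Tprod.simps)
  qed
  then show ?thesis
    by simp
qed

lemma mA_Tprod_continuant:
  "mA (Tprod v \<beta> (Suc (Suc n))) = mB (Tprod v \<beta> (Suc (Suc n))) * [:v 1:]
    + [:0, 1:] * continuant (\<lambda>i. [:v i + v (Suc i):]) (\<lambda>i. [:\<beta> i, 1:]) 2 n"
proof -
  define E where "E k = mA (Tprod v \<beta> k) - mB (Tprod v \<beta> k) * [:v 1:]" for k
  have E_rec: "E (Suc (Suc j)) = [:v (Suc j) + v (Suc (Suc j)):] * E (Suc j) + argpoly \<beta> (Suc j) * E j"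
    for j unfolding E_def Tprod_first_row_rec by (simp add: algebra_simps)
  have E_0_1: "E 0 = 1" "E (Suc 0) = 0"
    by (simp_all add: E_def Tprod_0_1 del: Tprod.simps)
  have "E (Suc (Suc n)) = [:0, 1:] * continuant (\<lambda>i. [:v i + v (Suc i):]) (\<lambda>i. [:\<beta> i, 1:]) 2 n"
  proof (rule continuant_unique)
    show "E (Suc (Suc 0)) = [:0, 1:]"
      using E_rec[of 0] by (simp add: E_0_1 argpoly_def)
    show "E (Suc (Suc (Suc 0))) = [:0, 1:] * [:v 2 + v (Suc 2):]"
      using E_rec[of 1] E_rec[of 0] by (simp add: E_0_1 argpoly_def numeral_eq_Suc mult.commute)
  next
    fix k
    show "E (Suc (Suc (Suc (Suc k)))) = [:v (2 + k + 1) + v (Suc (2 + k + 1)):] *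
        E (Suc (Suc (Suc k))) + [:\<beta> (2 + k), 1:] * E (Suc (Suc k))"
      using E_rec[of "Suc (Suc k)"] by (simp add: argpoly_def numeral_eq_Suc)
  qed
  then show ?thesis
    by (simp add: E_def algebra_simps)
qed

theorem mainTheorem4:
  fixes v \<beta> :: "nat \<Rightarrow> 'a::comm_ring_1" and N :: nat
  assumes "N \<ge> 3"
  defines "f \<equiv> (\<lambda>n. [:v n + v (Suc n):])"
    and "c \<equiv> (\<lambda>n. [:\<beta> n, 1:])"
  shows "\<exists>At :: 'a poly.
     mA (Tprod v \<beta> N) = mB (Tprod v \<beta> N) * [:v 1:] + At * [:0, 1:]
     \<and> (N = 3 \<longrightarrow> At = f 2)
     \<and> (N \<ge> 4 \<longrightarrow> At = meval f (dops c 2 (N - 2) (fmono 2 (N - 1))))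
     \<and> mB (Tprod v \<beta> N) = meval f (dops c 1 (N - 2) (fmono 1 (N - 1)))"
proof (intro exI conjI impI)
  have N2: "Suc (Suc (N - 2)) = N" and N1: "Suc (N - 1) = N"
    using assms(1) by auto
  show "mA (Tprod v \<beta> N) = mB (Tprod v \<beta> N) * [:v 1:] + continuant f c 2 (N - 2) * [:0, 1:]"
    using mA_Tprod_continuant[of v \<beta> "N - 2"] unfolding N2 f_def c_def by (simp add: mult.commute)
  show "N = 3 \<Longrightarrow> continuant f c 2 (N - 2) = f 2"
    by simp
  show "N \<ge> 4 \<Longrightarrow> continuant f c 2 (N - 2) = meval f (dops c 2 (N - 2) (fmono 2 (N - 1)))"
    using meval_dops_fmono[of f c 2 "N - 4"]
    by (simp add: Suc_diff_Suc numeral_eq_Suc)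
  show "mB (Tprod v \<beta> N) = meval f (dops c 1 (N - 2) (fmono 1 (N - 1)))"
    using mB_Tprod_continuant[of v \<beta> "N - 1"] meval_dops_fmono[of f c 1 "N - 3"] assms(1)
    unfolding N1 f_def c_def by (simp add: Suc_diff_Suc numeral_eq_Suc)
qed

end
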